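(* Let $A$ be a real $n\times n$ matrix of the form $A=CDE$, where $C,E$ are invertible real $n\times n$ matrices and $D$ is a diagonal matrix with some zero entries on its main diagonal. Let $D'$ be the diagonal matrix obtained from $D$ by replacing each zero diagonal entry with $1$ (and keeping the nonzero entries), and let $B=(C^{-1})^{\top}D'E$. Then $B$ is invertible and the pair $(A,B)$ is monotone, i.e. $\langle Ax-Ay,\,Bx-By\rangle\ge0$ for all $x,y\in\mathbb{R}^n$.
   Context: For maps $F_1,F_2:\mathbb{R}^n\to\mathbb{R}^n$, the pair $(F_1,F_2)$ is called monotone if $\langle F_1(x)-F_1(y),F_2(x)-F_2(y)\rangle\ge 0$ for all $x,y$. *)

theory Defs
  imports "HOL-Analysis.Analysis"
begin

definition monotone_pair :: "('a::real_inner \<Rightarrow> 'a) \<Rightarrow> ('a \<Rightarrow> 'a) \<Rightarrow> bool" where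
  "monotone_pair F1 F2 \<longleftrightarrow> (\<forall>x y. (F1 x - F1 y) \<bullet> (F2 x - F2 y) \<ge> 0)"

definition is_diagonal :: "real^'n^'n \<Rightarrow> bool" where
  "is_diagonal D \<longleftrightarrow> (\<forall>i j. i \<noteq> j \<longrightarrow> D $ i $ j = 0)"

definition fill_zero_diag :: "real^'n^'n \<Rightarrow> real^'n^'n" where
  "fill_zero_diag D = (\<chi> i j. if i = j \<and> D $ i $ j = 0 then 1 else D $ i $ j)"

end

theory Submission
  imports Defs
begin

(* Both maps are linear, so monotonicity only has to be checked at a single vector z.
   Writing w = E z, the factors C and (C^-1)^T cancel in the inner product, leaving
   (D w) . (D' w) = sum_i d_i d'_i w_i^2; and d_i d'_i = d_i^2 because D' differs from D
   only where d_i = 0. B is invertible since D' is diagonal without zeros on the diagonal. *)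

lemma monotone_pair_linear_iff:
  assumes "linear f" and "linear g"
  shows "monotone_pair f g \<longleftrightarrow> (\<forall>z. 0 \<le> f z \<bullet> g z)"
  unfolding monotone_pair_def
  by (metis assms linear_diff diff_zero)

lemma matrix_inv_inverse:
  fixes A :: "'a::semiring_1^'n^'n"
  assumes "invertible A"
  shows "A ** matrix_inv A = mat 1" and "matrix_inv A ** A = mat 1"
  using someI_ex[OF assms[unfolded invertible_def]]
  unfolding matrix_inv_def by auto

lemma invertible_matrix_inv:
  fixes A :: "'a::semiring_1^'n^'n"
  assumes "invertible A"
  shows "invertible (matrix_inv A)"
  using matrix_inv_inverse[OF assms] unfolding invertible_def by blast

lemma inner_matrix_transpose_inv:
  fixes C :: "real^'n^'n"
  assumes "invertible C"
  shows "(C *v x) \<bullet> (transpose (matrix_inv C) *v y) = x \<bullet> y"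
proof -
  have "(C *v x) \<bullet> (transpose (matrix_inv C) *v y) = y \<bullet> (matrix_inv C *v (C *v x))"
    by (metis dot_lmul_matrix inner_commute transpose_matrix_vector)
  also have "matrix_inv C *v (C *v x) = x"
    by (simp add: matrix_vector_mul_assoc matrix_inv_inverse[OF assms])
  finally show ?thesis by (simp add: inner_commute)
qed

lemma diagonal_matrix_vector_mult:
  assumes "is_diagonal D"
  shows "(D *v w) $ i = D $ i $ i * w $ i"
proof -
  have "(D *v w) $ i = (\<Sum>j\<in>UNIV. D $ i $ j * w $ j)"
    by (simp add: matrix_vector_mult_def)
  also have "\<dots> = D $ i $ i * w $ i"
    using assms by (subst sum.mono_neutral_right[of UNIV "{i}"]) (auto simp: is_diagonal_def)
  finally show ?thesis .
qed

lemma inner_diagonal_matrix_vector_mult: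
  assumes "is_diagonal D" and "is_diagonal F"
  shows "(D *v w) \<bullet> (F *v w) = (\<Sum>i\<in>UNIV. D $ i $ i * F $ i $ i * (w $ i)\<^sup>2)"
  by (simp add: inner_vec_def diagonal_matrix_vector_mult[OF assms(1)]
      diagonal_matrix_vector_mult[OF assms(2)] power2_eq_square mult_ac)

lemma invertible_diagonal:
  fixes D :: "real^'n^'n"
  assumes "is_diagonal D" and "\<And>i. D $ i $ i \<noteq> 0"
  shows "invertible D"
  using assms by (simp add: invertible_det_nz det_diagonal is_diagonal_def)

lemma is_diagonal_fill_zero_diag: "is_diagonal D \<Longrightarrow> is_diagonal (fill_zero_diag D)"
  by (auto simp: is_diagonal_def fill_zero_diag_def)

lemma fill_zero_diag_diag_nonzero: "fill_zero_diag D $ i $ i \<noteq> 0"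
  by (auto simp: fill_zero_diag_def)

lemma diag_times_fill_zero_diag: "D $ i $ i * fill_zero_diag D $ i $ i = (D $ i $ i)\<^sup>2"
  by (simp add: fill_zero_diag_def power2_eq_square)

lemma invertible_fill_zero_diag: "is_diagonal D \<Longrightarrow> invertible (fill_zero_diag D)"
  by (simp add: invertible_diagonal is_diagonal_fill_zero_diag fill_zero_diag_diag_nonzero)

theorem theorem3p2:
  fixes A C D E :: "real^'n^'n"
  assumes "invertible C" and "invertible E"
    and "is_diagonal D" and "\<exists>i. D $ i $ i = 0"
    and "A = C ** D ** E"
  defines "B \<equiv> transpose (matrix_inv C) ** fill_zero_diag D ** E"
  shows "invertible B \<and> monotone_pair (\<lambda>x. A *v x) (\<lambda>x. B *v x)"
proof
  show "invertible B"
    unfolding B_def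
    using assms(1,2,3) by (simp add: invertible_mult transpose_invertible
        invertible_matrix_inv invertible_fill_zero_diag)
next
  have "0 \<le> (A *v z) \<bullet> (B *v z)" for z
  proof -
    let ?w = "E *v z"
    have "(A *v z) \<bullet> (B *v z) = (D *v ?w) \<bullet> (fill_zero_diag D *v ?w)"
      by (simp add: assms(5) B_def matrix_vector_mul_assoc[symmetric]
          inner_matrix_transpose_inv[OF assms(1)] del: transpose_matrix_vector)
    also have "\<dots> = (\<Sum>i\<in>UNIV. (D $ i $ i)\<^sup>2 * (?w $ i)\<^sup>2)"
      using assms(3) by (simp add: inner_diagonal_matrix_vector_mult
          is_diagonal_fill_zero_diag diag_times_fill_zero_diag)
    finally show ?thesis by (simp add: sum_nonneg)
  qed
  then show "monotone_pair (\<lambda>x. A *v x) (\<lambda>x. B *v x)"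
    by (simp add: monotone_pair_linear_iff)
qed

end
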